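(* Let $H$ be a real or complex Hilbert space of dimension $n$, let $N\ge n$, let $F=\{f_i\}_{i=1}^N$ be a frame for $H$ with frame operator $S_F$, and let $\{q_i\}_{i=1}^N$ be a weight number sequence. Set $c=\max\{q_i\|f_i\|\,\|S_F^{-1}f_i\|:1\le i\le N\}$, $\varrho_1=\{i:q_i\|f_i\|\,\|S_F^{-1}f_i\|=c\}$, $\varrho_2=\{1,\dots,N\}\setminus\varrho_1$, and $H_j=\operatorname{span}\{f_i:i\in\varrho_j\}$ for $j=1,2$. Suppose $H_1\cap H_2=\{0\}$ and $\{f_i:i\in\varrho_2\}$ is linearly independent. Then the canonical dual $\{S_F^{-1}f_i\}_{i=1}^N$ is the unique 1-erasure probabilistic optimal dual of $F$, and therefore it is an $m$-erasure probabilistic optimal dual of $F$ for every $m$.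
   Context: Inner products are linear in the first argument. A frame for $H$ is a finite sequence spanning $H$. Analysis operator: $\Theta_F f=(\langle f,f_i\rangle)_i$. Synthesis operator: $\Theta_G^*(c)=\sum_ic_ig_i$. Frame operator: $S_F=\Theta_F^*\Theta_F$. A dual of $F$ is a frame $G=\{g_i\}_{i=1}^N$ with $f=\sum_i\langle f,f_i\rangle g_i=\sum_i\langle f,g_i\rangle f_i$ for all $f$. A probability sequence satisfies $0\le p_i\le1$ and $\sum p_i=1$. Weight numbers: $q_i=\frac{\sum_jp_j}{\sum_jp_j-p_i}\cdot\frac{N-1}{n}$ (assumed well defined). For $1\le m\le N$, $\mathcal{D}_m^p$ is the set of $N\times N$ diagonal matrices $D$ for which there is $\Lambda$ with $|\Lambda|=m$, $D_{ii}=q_i$ for $i\in\Lambda$ and $0$ otherwise. $d_m^p(F,G)=\max\{\|\Theta_G^*D\Theta_F\|:D\in\mathcal{D}_m^p\}$ (operator norm). Optimal duals are defined recursively: - $G$ is a 1-erasure probabilistic optimal dual of $F$ if $d_1^p(F,G)=\mu_1(F):=\inf\{d_1^p(F,G'):G'\text{ a dual of }F\}$; - for $m\ge2$, $G$ is an $m$-erasure probabilistic optimal dual of $F$ if it is an $(m-1)$-erasure probabilistic optimal dual and $d_m^p(F,G)=\mu_m(F):=\inf\{d_m^p(F,G'):G'\text{ an }(m-1)\text{-erasure probabilistic optimal dual of }F\}$. *)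

theory Defs
  imports "HOL-Analysis.Analysis"
begin

text \<open>
  The n-dimensional Hilbert space H over the scalar field K (K = real or complex) is modelled
  as K^n, embedded into complex^'n (n = CARD('n)); the scalar field is encoded by a set
  K of complex numbers, which is either the reals or all complex numbers. Frames / sequences are functions
  nat => complex^'n, of which only the indices 0..N-1 matter.
\<close>

definition scalar_field :: "complex set \<Rightarrow> bool" where
  "scalar_field K \<longleftrightarrow> K = \<real> \<or> K = UNIV"

definition hspace :: "complex set \<Rightarrow> (complex ^ 'n) set" where
  "hspace K = {x. \<forall>i. x $ i \<in> K}"

definition hinner :: "complex ^ 'n \<Rightarrow> complex ^ 'n \<Rightarrow> complex" where
  "hinner x y = (\<Sum>i\<in>UNIV. x $ i * cnj (y $ i))"

definition kspan :: "complex set \<Rightarrow> nat set \<Rightarrow> (nat \<Rightarrow> complex ^ 'n) \<Rightarrow> (complex ^ 'n) set" where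
  "kspan K I f = {x. \<exists>c. (\<forall>i\<in>I. c i \<in> K) \<and> x = (\<Sum>i\<in>I. c i *s f i)}"

definition klin_indep :: "complex set \<Rightarrow> nat set \<Rightarrow> (nat \<Rightarrow> complex ^ 'n) \<Rightarrow> bool" where
  "klin_indep K I f \<longleftrightarrow>
     (\<forall>c. (\<forall>i\<in>I. c i \<in> K) \<and> (\<Sum>i\<in>I. c i *s f i) = 0 \<longrightarrow> (\<forall>i\<in>I. c i = 0))"

definition is_frame :: "complex set \<Rightarrow> nat \<Rightarrow> (nat \<Rightarrow> complex ^ 'n) \<Rightarrow> bool" where
  "is_frame K N f \<longleftrightarrow> (\<forall>i<N. f i \<in> hspace K) \<and> kspan K {..<N} f = hspace K"

definition frame_op :: "nat \<Rightarrow> (nat \<Rightarrow> complex ^ 'n) \<Rightarrow> complex ^ 'n \<Rightarrow> complex ^ 'n" where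
  "frame_op N f x = (\<Sum>i<N. hinner x (f i) *s f i)"

definition frame_op_inv :: "complex set \<Rightarrow> nat \<Rightarrow> (nat \<Rightarrow> complex ^ 'n) \<Rightarrow> complex ^ 'n \<Rightarrow> complex ^ 'n" where
  "frame_op_inv K N f y = (THE x. x \<in> hspace K \<and> frame_op N f x = y)"

definition canonical_dual :: "complex set \<Rightarrow> nat \<Rightarrow> (nat \<Rightarrow> complex ^ 'n) \<Rightarrow> nat \<Rightarrow> complex ^ 'n" where
  "canonical_dual K N f i = frame_op_inv K N f (f i)"

definition is_dual :: "complex set \<Rightarrow> nat \<Rightarrow> (nat \<Rightarrow> complex ^ 'n) \<Rightarrow> (nat \<Rightarrow> complex ^ 'n) \<Rightarrow> bool" where
  "is_dual K N f g \<longleftrightarrow> is_frame K N g \<and>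
     (\<forall>x\<in>hspace K. x = (\<Sum>i<N. hinner x (f i) *s g i) \<and> x = (\<Sum>i<N. hinner x (g i) *s f i))"

definition prob_seq :: "nat \<Rightarrow> (nat \<Rightarrow> real) \<Rightarrow> bool" where
  "prob_seq N p \<longleftrightarrow> (\<forall>i<N. 0 \<le> p i \<and> p i \<le> 1) \<and> (\<Sum>i<N. p i) = 1"

definition weight :: "nat \<Rightarrow> nat \<Rightarrow> (nat \<Rightarrow> real) \<Rightarrow> nat \<Rightarrow> real" where
  "weight n N p i = (\<Sum>j<N. p j) / ((\<Sum>j<N. p j) - p i) * ((real N - 1) / real n)"

definition opnorm :: "complex set \<Rightarrow> (complex ^ 'n \<Rightarrow> complex ^ 'n) \<Rightarrow> real" where
  "opnorm K T = Sup {norm (T x) | x. x \<in> hspace K \<and> norm x \<le> 1}"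

text \<open>Theta_G^* D Theta_F for D in D_m^p given by the index set L (|L| = m).\<close>
definition erasure_op :: "nat \<Rightarrow> (nat \<Rightarrow> real) \<Rightarrow> nat set \<Rightarrow> (nat \<Rightarrow> complex ^ 'n)
    \<Rightarrow> (nat \<Rightarrow> complex ^ 'n) \<Rightarrow> complex ^ 'n \<Rightarrow> complex ^ 'n" where
  "erasure_op N p L f g x =
     (\<Sum>i\<in>L. (complex_of_real (weight CARD('n) N p i) * hinner x (f i)) *s g i)"

definition dmp :: "complex set \<Rightarrow> nat \<Rightarrow> (nat \<Rightarrow> real) \<Rightarrow> nat \<Rightarrow> (nat \<Rightarrow> complex ^ 'n)
    \<Rightarrow> (nat \<Rightarrow> complex ^ 'n) \<Rightarrow> real" where
  "dmp K N p m f g = Max {opnorm K (erasure_op N p L f g) | L. L \<subseteq> {..<N} \<and> card L = m}"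

fun opt_dual :: "complex set \<Rightarrow> nat \<Rightarrow> (nat \<Rightarrow> real) \<Rightarrow> (nat \<Rightarrow> complex ^ 'n) \<Rightarrow> nat
    \<Rightarrow> (nat \<Rightarrow> complex ^ 'n) \<Rightarrow> bool" where
  "opt_dual K N p f 0 g = is_dual K N f g"
| "opt_dual K N p f (Suc m) g \<longleftrightarrow> opt_dual K N p f m g \<and>
     dmp K N p (Suc m) f g = Inf {dmp K N p (Suc m) f g' | g'. opt_dual K N p f m g'}"

end

theory Submission
  imports Defs
begin

text \<open>
  For one erasure the distance is \<open>d\<^sub>1(F, G) = max\<^sub>i q\<^sub>i \<parallel>f\<^sub>i\<parallel> \<parallel>g\<^sub>i\<parallel>\<close>, and the canonical
  dual \<open>h\<^sub>i = S\<^sub>F\<^sup>-\<^sup>1 f\<^sub>i\<close> attains the value \<open>c\<close>. Let \<open>G\<close> be a dual with \<open>d\<^sub>1(F, G) \<le> c\<close>, so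
  that \<open>\<parallel>g\<^sub>i\<parallel> \<le> \<parallel>h\<^sub>i\<parallel>\<close> on \<open>\<rho>\<^sub>1\<close>, and write \<open>g\<^sub>i = h\<^sub>i + u\<^sub>i\<close>. Duality gives
  \<open>\<Sum>\<^sub>i \<langle>x, u\<^sub>i\<rangle> f\<^sub>i = 0\<close> for all \<open>x\<close>; as \<open>H\<^sub>1 \<inter> H\<^sub>2 = {0}\<close>, the partial sums over \<open>\<rho>\<^sub>1\<close> and
  over \<open>\<rho>\<^sub>2\<close> vanish separately. Over \<open>\<rho>\<^sub>2\<close> linear independence gives \<open>\<langle>x, u\<^sub>i\<rangle> = 0\<close>, so
  \<open>u\<^sub>i = 0\<close>. Over \<open>\<rho>\<^sub>1\<close>, applying \<open>S\<^sub>F\<^sup>-\<^sup>1\<close> shows that \<open>\<Sum>\<^sub>i \<langle>x, u\<^sub>i\<rangle> h\<^sub>i = 0\<close>; taking the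
  trace, \<open>\<Sum>\<^sub>i \<langle>h\<^sub>i, u\<^sub>i\<rangle> = 0\<close>, so \<open>\<Sum> \<parallel>g\<^sub>i\<parallel>\<^sup>2 = \<Sum> \<parallel>h\<^sub>i\<parallel>\<^sup>2 + \<Sum> \<parallel>u\<^sub>i\<parallel>\<^sup>2\<close> over \<open>\<rho>\<^sub>1\<close>, and
  \<open>u\<^sub>i = 0\<close> there too. Hence the canonical dual is the unique 1-erasure optimal dual, and each
  later infimum in the recursive definition ranges over this single dual.
\<close>

lemma scalar_field_of_real: "scalar_field K \<Longrightarrow> complex_of_real r \<in> K"
  by (auto simp: scalar_field_def)

lemma scalar_field_uminus: "scalar_field K \<Longrightarrow> a \<in> K \<Longrightarrow> - a \<in> K"
  by (auto simp: scalar_field_def)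

lemma scalar_field_sum:
  "scalar_field K \<Longrightarrow> (\<And>i. i \<in> I \<Longrightarrow> a i \<in> K) \<Longrightarrow> sum a I \<in> K"
  by (auto simp: scalar_field_def intro: sum_in_Reals)

lemma hinner_in_scalar_field:
  "scalar_field K \<Longrightarrow> x \<in> hspace K \<Longrightarrow> y \<in> hspace K \<Longrightarrow> hinner x y \<in> K"
  unfolding hinner_def hspace_def scalar_field_def by (auto simp: Reals_cnj_iff)

lemma hspace_zero: "scalar_field K \<Longrightarrow> 0 \<in> hspace K"
  by (auto simp: hspace_def scalar_field_def)

lemma hspace_diff:
  "scalar_field K \<Longrightarrow> x \<in> hspace K \<Longrightarrow> y \<in> hspace K \<Longrightarrow> x - y \<in> hspace K"
  by (auto simp: hspace_def scalar_field_def)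

lemma hspace_smult: "scalar_field K \<Longrightarrow> c \<in> K \<Longrightarrow> x \<in> hspace K \<Longrightarrow> c *s x \<in> hspace K"
  by (auto simp: hspace_def scalar_field_def)

lemma hspace_sum:
  "scalar_field K \<Longrightarrow> (\<And>i. i \<in> I \<Longrightarrow> a i \<in> hspace K) \<Longrightarrow> sum a I \<in> hspace K"
  by (auto simp: hspace_def intro!: scalar_field_sum)

lemma smult_of_real: "complex_of_real r *s x = r *\<^sub>R (x :: complex ^ 'n)"
  by (simp add: vec_eq_iff) (metis scaleR_conv_of_real)

lemma subspace_hspace: "scalar_field K \<Longrightarrow> subspace (hspace K)"
  unfolding subspace_def smult_of_real[symmetric]
  by (auto simp: hspace_def scalar_field_def)

lemma axis_in_hspace: "scalar_field K \<Longrightarrow> axis k 1 \<in> hspace K"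
  by (auto simp: hspace_def scalar_field_def axis_def)

lemma sum_smult_in_kspan: "\<forall>i\<in>I. c i \<in> K \<Longrightarrow> (\<Sum>i\<in>I. c i *s f i) \<in> kspan K I f"
  unfolding kspan_def by blast

lemma kspan_subset_hspace:
  "scalar_field K \<Longrightarrow> (\<And>i. i \<in> I \<Longrightarrow> f i \<in> hspace K) \<Longrightarrow> kspan K I f \<subseteq> hspace K"
  unfolding kspan_def by (auto intro!: hspace_sum hspace_smult)

lemma hinner_zero_left [simp]: "hinner 0 y = 0"
  and hinner_zero_right [simp]: "hinner y 0 = 0"
  by (simp_all add: hinner_def)

lemma hinner_add_left: "hinner (x + y) z = hinner x z + hinner y z"
  and hinner_add_right: "hinner z (x + y) = hinner z x + hinner z y"
  and hinner_diff_right: "hinner z (x - y) = hinner z x - hinner z y"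
  by (simp_all add: hinner_def sum.distrib sum_subtractf algebra_simps)

lemma hinner_smult_left: "hinner (c *s x) y = c * hinner x y"
  and hinner_smult_right: "hinner x (c *s y) = cnj c * hinner x y"
  by (simp_all add: hinner_def sum_distrib_left algebra_simps)

lemma hinner_commute: "hinner y x = cnj (hinner x y)"
  by (simp add: hinner_def mult.commute)

lemma hinner_sum_left: "hinner (\<Sum>i\<in>I. a i) y = (\<Sum>i\<in>I. hinner (a i) y)"
  by (induction I rule: infinite_finite_induct) (simp_all add: hinner_add_left)

lemma hinner_sum_right: "hinner y (\<Sum>i\<in>I. a i) = (\<Sum>i\<in>I. hinner y (a i))"
  by (induction I rule: infinite_finite_induct) (simp_all add: hinner_add_right)

lemma Re_hinner: "Re (hinner x y) = inner x y"
  by (simp add: hinner_def inner_vec_def inner_complex_def Re_sum)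

lemma hinner_self: "hinner x x = complex_of_real ((norm x)\<^sup>2)"
proof -
  have "Im (hinner x x) = 0"
    by (simp add: hinner_def Im_sum algebra_simps)
  then show ?thesis
    by (simp add: complex_eq_iff Re_hinner power2_norm_eq_inner)
qed

lemma hinner_self_eq_0 [simp]: "hinner x x = 0 \<longleftrightarrow> x = 0"
  by (simp add: hinner_self)

lemma norm_smult: "norm (c *s x) = norm c * norm (x :: complex ^ 'n)"
  by (simp add: norm_vec_def norm_mult L2_set_right_distrib)

lemma norm_hinner_le: "norm (hinner x y) \<le> norm x * norm y"
proof -
  have "norm (hinner x y) \<le> (\<Sum>i\<in>UNIV. \<bar>norm (x $ i)\<bar> * \<bar>norm (y $ i)\<bar>)"
    unfolding hinner_def by (rule order_trans[OF norm_sum]) (simp add: norm_mult)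
  also have "\<dots> \<le> norm x * norm y"
    unfolding norm_vec_def by (rule L2_set_mult_ineq)
  finally show ?thesis .
qed

section \<open>The frame operator\<close>

lemma frame_op_add: "frame_op N f (x + y) = frame_op N f x + frame_op N f y"
  by (simp add: frame_op_def hinner_add_left vector_sadd_rdistrib sum.distrib)

lemma frame_op_smult: "frame_op N f (c *s x) = c *s frame_op N f x"
  by (simp add: frame_op_def hinner_smult_left vec_eq_iff sum_distrib_left mult.assoc)

lemma frame_op_zero [simp]: "frame_op N f 0 = 0"
  using frame_op_smult[of N f 0 0] by simp

lemma frame_op_sum: "frame_op N f (\<Sum>i\<in>I. a i) = (\<Sum>i\<in>I. frame_op N f (a i))"
  by (induction I rule: infinite_finite_induct) (simp_all add: frame_op_add)

lemma linear_frame_op: "linear (frame_op N f)"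
  by (rule linearI) (simp_all add: frame_op_add frame_op_smult flip: smult_of_real)

lemma frame_op_diff: "frame_op N f (x - y) = frame_op N f x - frame_op N f y"
  by (rule linear_diff[OF linear_frame_op])

lemma hinner_frame_op_left: "hinner (frame_op N f x) y = (\<Sum>i<N. hinner x (f i) * hinner (f i) y)"
  by (simp add: frame_op_def hinner_sum_left hinner_smult_left)

lemma frame_op_self_adjoint: "hinner (frame_op N f x) y = hinner x (frame_op N f y)"
proof -
  have "hinner x (frame_op N f y) = cnj (hinner (frame_op N f y) x)"
    by (rule hinner_commute)
  also have "\<dots> = (\<Sum>i<N. hinner x (f i) * hinner (f i) y)"
    by (simp add: hinner_frame_op_left hinner_commute[of x] hinner_commute[of "f _" y] mult.commute)
  finally show ?thesis
    by (simp add: hinner_frame_op_left)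
qed

lemma frame_in_hspace: "is_frame K N f \<Longrightarrow> i < N \<Longrightarrow> f i \<in> hspace K"
  by (simp add: is_frame_def)

lemma frame_op_in_hspace:
  assumes "scalar_field K" and "is_frame K N f" and "x \<in> hspace K"
  shows "frame_op N f x \<in> hspace K"
  using assms unfolding frame_op_def is_frame_def
  by (auto intro!: hspace_sum hspace_smult hinner_in_scalar_field)

lemma eq_0_if_frame_op_eq_0:
  assumes K: "scalar_field K" and fr: "is_frame K N f" and x: "x \<in> hspace K"
    and Sx: "frame_op N f x = 0"
  shows "x = 0"
proof -
  have "(\<Sum>i<N. (norm (hinner x (f i)))\<^sup>2) = Re (hinner (frame_op N f x) x)"
    by (simp add: hinner_frame_op_left Re_sum hinner_commute[of "f _" x]
        flip: complex_norm_square)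
  also have "\<dots> = 0"
    using Sx by simp
  finally have orth: "\<forall>i<N. hinner x (f i) = 0"
    by (subst (asm) sum_nonneg_eq_0_iff) auto
  from fr x obtain c where c: "x = (\<Sum>i<N. c i *s f i)"
    unfolding is_frame_def kspan_def by blast
  have "hinner x x = (\<Sum>i<N. cnj (c i) * hinner x (f i))"
    by (subst (2) c) (simp add: hinner_sum_right hinner_smult_right)
  then show ?thesis
    using orth by simp
qed

lemma inj_on_frame_op:
  assumes K: "scalar_field K" and fr: "is_frame K N f"
  shows "inj_on (frame_op N f) (hspace K)"
proof (rule inj_onI)
  fix x y
  assume x: "x \<in> hspace K" and y: "y \<in> hspace K" and eq: "frame_op N f x = frame_op N f y"
  have "frame_op N f (x - y) = 0"
    using eq by (simp add: frame_op_diff)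
  then have "x - y = 0"
    by (rule eq_0_if_frame_op_eq_0[OF K fr hspace_diff[OF K x y]])
  then show "x = y"
    by simp
qed

lemma frame_op_image:
  fixes f :: "nat \<Rightarrow> complex ^ 'n"
  assumes K: "scalar_field K" and fr: "is_frame K N f"
  shows "frame_op N f ` hspace K = hspace K"
proof (rule eucl.subspace_dim_equal)
  have "inj_on (frame_op N f) (span (hspace K))"
    using inj_on_frame_op[OF K fr] by (simp add: span_eq_iff[THEN iffD2, OF subspace_hspace[OF K]])
  then have "dim (frame_op N f ` hspace K) = dim (hspace K :: (complex ^ 'n) set)"
    by (rule eucl.dim_image_eq[OF linear_frame_op])
  then show "dim (hspace K :: (complex ^ 'n) set) \<le> dim (frame_op N f ` hspace K)"
    by simp
qed (use linear_subspace_image[OF linear_frame_op subspace_hspace[OF K]]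
      subspace_hspace[OF K] frame_op_in_hspace[OF K fr] in auto)

lemma frame_op_inv:
  assumes K: "scalar_field K" and fr: "is_frame K N f" and y: "y \<in> hspace K"
  shows "frame_op_inv K N f y \<in> hspace K" and "frame_op N f (frame_op_inv K N f y) = y"
proof -
  obtain x where x: "x \<in> hspace K" "frame_op N f x = y"
    using frame_op_image[OF K fr] y by (metis imageE)
  have "\<exists>!x. x \<in> hspace K \<and> frame_op N f x = y"
  proof (rule ex1I[of _ x])
    show "\<And>z. z \<in> hspace K \<and> frame_op N f z = y \<Longrightarrow> z = x"
      using inj_onD[OF inj_on_frame_op[OF K fr]] x by metis
  qed (use x in simp)
  then have "frame_op_inv K N f y \<in> hspace K \<and> frame_op N f (frame_op_inv K N f y) = y"
    unfolding frame_op_inv_def by (rule theI')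
  then show "frame_op_inv K N f y \<in> hspace K" and "frame_op N f (frame_op_inv K N f y) = y"
    by simp_all
qed

lemma canonical_dual:
  assumes "scalar_field K" and "is_frame K N f" and "i < N"
  shows "canonical_dual K N f i \<in> hspace K" and "frame_op N f (canonical_dual K N f i) = f i"
  using frame_op_inv[OF assms(1,2) frame_in_hspace[OF assms(2,3)]]
  by (simp_all add: canonical_dual_def)

lemma sum_smult_canonical_dual:
  assumes K: "scalar_field K" and fr: "is_frame K N f" and I: "I \<subseteq> {..<N}"
    and c: "\<forall>i\<in>I. c i \<in> K"
  shows "(\<Sum>i\<in>I. c i *s canonical_dual K N f i) \<in> hspace K"
    and "frame_op N f (\<Sum>i\<in>I. c i *s canonical_dual K N f i) = (\<Sum>i\<in>I. c i *s f i)"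
  using K canonical_dual[OF K fr] I c
  by (auto simp: frame_op_sum frame_op_smult intro!: hspace_sum hspace_smult sum.cong)

lemma sum_smult_canonical_dual_eq_0:
  assumes K: "scalar_field K" and fr: "is_frame K N f" and I: "I \<subseteq> {..<N}"
    and c: "\<forall>i\<in>I. c i \<in> K" and "(\<Sum>i\<in>I. c i *s f i) = 0"
  shows "(\<Sum>i\<in>I. c i *s canonical_dual K N f i) = 0"
  using sum_smult_canonical_dual[OF K fr I c] assms(5) by (simp add: eq_0_if_frame_op_eq_0[OF K fr])

lemma sum_hinner_frame_canonical_dual:
  assumes K: "scalar_field K" and fr: "is_frame K N f" and x: "x \<in> hspace K"
  shows "(\<Sum>i<N. hinner x (f i) *s canonical_dual K N f i) = x"
proof -
  have c: "\<forall>i\<in>{..<N}. hinner x (f i) \<in> K"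
    using hinner_in_scalar_field[OF K x] frame_in_hspace[OF fr] by auto
  have "frame_op N f (\<Sum>i<N. hinner x (f i) *s canonical_dual K N f i) = frame_op N f x"
    unfolding sum_smult_canonical_dual(2)[OF K fr order_refl c] by (simp add: frame_op_def)
  then show ?thesis
    using inj_onD[OF inj_on_frame_op[OF K fr]] sum_smult_canonical_dual(1)[OF K fr order_refl c] x
    by blast
qed

lemma sum_hinner_canonical_dual_frame:
  assumes K: "scalar_field K" and fr: "is_frame K N f" and x: "x \<in> hspace K"
  shows "(\<Sum>i<N. hinner x (canonical_dual K N f i) *s f i) = x"
proof -
  obtain y where y: "y \<in> hspace K" "frame_op N f y = x"
    using frame_op_image[OF K fr] x by (metis imageE)
  have "hinner x (canonical_dual K N f i) = hinner y (f i)" if "i < N" for i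
    using canonical_dual(2)[OF K fr that] y(2) by (metis frame_op_self_adjoint)
  then have "(\<Sum>i<N. hinner x (canonical_dual K N f i) *s f i) = frame_op N f y"
    by (simp add: frame_op_def)
  then show ?thesis
    using y by simp
qed

lemma is_dual_canonical_dual:
  fixes f :: "nat \<Rightarrow> complex ^ 'n"
  assumes K: "scalar_field K" and fr: "is_frame K N f"
  shows "is_dual K N f (canonical_dual K N f)"
proof -
  have in_H: "\<forall>i<N. canonical_dual K N f i \<in> hspace K"
    using canonical_dual(1)[OF K fr] by blast
  have "hspace K \<subseteq> kspan K {..<N} (canonical_dual K N f)"
  proof
    fix x :: "complex ^ 'n"
    assume x: "x \<in> hspace K"
    have "\<forall>i\<in>{..<N}. hinner x (f i) \<in> K"
      using hinner_in_scalar_field[OF K x] frame_in_hspace[OF fr] by auto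
    then show "x \<in> kspan K {..<N} (canonical_dual K N f)"
      unfolding kspan_def using sum_hinner_frame_canonical_dual[OF K fr x] by force
  qed
  moreover have "kspan K {..<N} (canonical_dual K N f) \<subseteq> hspace K"
    using kspan_subset_hspace[OF K] in_H by blast
  ultimately show ?thesis
    using in_H sum_hinner_frame_canonical_dual[OF K fr] sum_hinner_canonical_dual_frame[OF K fr]
    by (auto simp: is_dual_def is_frame_def)
qed

section \<open>The one-erasure distance\<close>

lemma opnorm_rank_one:
  assumes K: "scalar_field K" and a: "a \<ge> 0" and u: "u \<in> hspace K"
  shows "opnorm K (\<lambda>x. (complex_of_real a * hinner x u) *s v) = a * norm u * norm v"
proof -
  have norm_image: "norm ((complex_of_real a * hinner x u) *s v) = a * norm (hinner x u) * norm v"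
    for x
    using a by (simp add: norm_smult norm_mult)
  show ?thesis
    unfolding opnorm_def
  proof (rule cSup_eq_maximum)
    show "a * norm u * norm v
        \<in> {norm ((complex_of_real a * hinner x u) *s v) |x. x \<in> hspace K \<and> norm x \<le> 1}"
    proof (cases "u = 0")
      case True
      then show ?thesis
        using hspace_zero[OF K] by (force simp: norm_image)
    next
      case False
      define x where "x = complex_of_real (1 / norm u) *s u"
      have "x \<in> hspace K"
        unfolding x_def using K u by (intro hspace_smult scalar_field_of_real)
      moreover have "norm x = 1"
        using False by (simp add: x_def norm_smult norm_divide)
      moreover have "hinner x u = complex_of_real (norm u)"
        using False by (simp add: x_def hinner_smult_left hinner_self power2_eq_square)
      ultimately show ?thesis
        by (force simp: norm_image)
    qed
  next
    fix y
    assume "y \<in> {norm ((complex_of_real a * hinner x u) *s v) |x. x \<in> hspace K \<and> norm x \<le> 1}"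
    then obtain x where x: "norm x \<le> 1" and y: "y = a * norm (hinner x u) * norm v"
      by (auto simp: norm_image)
    have "norm (hinner x u) \<le> norm x * norm u"
      by (rule norm_hinner_le)
    also have "\<dots> \<le> norm u"
      using x by (simp add: mult_left_le_one_le)
    finally show "y \<le> a * norm u * norm v"
      unfolding y using a by (simp add: mult_right_mono mult_left_mono)
  qed
qed

lemma dmp_1_eq_Max:
  assumes K: "scalar_field K" and fr: "is_frame K N f"
    and q: "\<forall>i<N. weight CARD('n) N p i \<ge> 0"
  shows "dmp K N p 1 f g
    = Max {weight CARD('n) N p i * norm (f i) * norm (g i :: complex ^ 'n) | i. i < N}"
proof -
  have "opnorm K (erasure_op N p {i} f g) = weight CARD('n) N p i * norm (f i) * norm (g i)"
    if "i < N" for i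
  proof -
    have "erasure_op N p {i} f g
        = (\<lambda>x. (complex_of_real (weight CARD('n) N p i) * hinner x (f i)) *s g i)"
      by (simp add: erasure_op_def fun_eq_iff)
    then show ?thesis
      using q that by (simp add: opnorm_rank_one[OF K _ frame_in_hspace[OF fr that]])
  qed
  then have "{opnorm K (erasure_op N p {i} f g) | i. i < N}
      = {weight CARD('n) N p i * norm (f i) * norm (g i) | i. i < N}"
    by force
  moreover have "{opnorm K (erasure_op N p L f g) | L. L \<subseteq> {..<N} \<and> card L = 1}
      = {opnorm K (erasure_op N p {i} f g) | i. i < N}"
    by (fastforce simp: card_1_singleton_iff)
  ultimately show ?thesis
    by (simp add: dmp_def)
qed

section \<open>Duals dominated by the canonical dual\<close>

lemma sum_hinner_eq_trace:
  fixes h u :: "'i \<Rightarrow> complex ^ 'n"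
  shows "(\<Sum>i\<in>I. hinner (h i) (u i)) = (\<Sum>k\<in>UNIV. (\<Sum>i\<in>I. hinner (axis k 1) (u i) *s h i) $ k)"
proof -
  have "hinner (axis k 1) v = cnj (v $ k)" for k and v :: "complex ^ 'n"
  proof -
    have "axis k 1 $ i * cnj (v $ i) = (if i = k then cnj (v $ k) else 0)" for i
      by (simp add: axis_def)
    then show ?thesis
      by (simp add: hinner_def)
  qed
  then have "(\<Sum>k\<in>UNIV. (\<Sum>i\<in>I. hinner (axis k 1) (u i) *s h i) $ k)
      = (\<Sum>k\<in>UNIV. \<Sum>i\<in>I. h i $ k * cnj (u i $ k))"
    by (simp add: sum_component mult.commute)
  also have "\<dots> = (\<Sum>i\<in>I. hinner (h i) (u i))"
    unfolding hinner_def by (rule sum.swap)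
  finally show ?thesis ..
qed

lemma sum_hinner_dual_diff_eq_0:
  assumes K: "scalar_field K" and fr: "is_frame K N f" and dual: "is_dual K N f g"
    and x: "x \<in> hspace K"
  shows "(\<Sum>i<N. hinner x (g i - canonical_dual K N f i) *s f i) = 0"
proof -
  have "x = (\<Sum>i<N. hinner x (g i) *s f i)"
    using dual x unfolding is_dual_def by blast
  then show ?thesis
    using sum_hinner_canonical_dual_frame[OF K fr x]
    by (simp add: hinner_diff_right sum_subtractf)
qed

lemma sum_smult_eq_0_split:
  assumes K: "scalar_field K" and R: "R \<subseteq> {..<N}"
    and inter: "kspan K R f \<inter> kspan K ({..<N} - R) f = {0}"
    and c: "\<forall>i<N. c i \<in> K" and sum: "(\<Sum>i<N. c i *s f i) = 0"
  shows "(\<Sum>i\<in>R. c i *s f i) = 0" and "(\<Sum>i\<in>{..<N} - R. c i *s f i) = 0"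
proof -
  let ?A = "\<Sum>i\<in>R. c i *s f i" and ?B = "\<Sum>i\<in>{..<N} - R. c i *s f i"
  have "?B + ?A = 0"
    using sum.subset_diff[OF R finite_lessThan, of "\<lambda>i. c i *s f i"] sum by simp
  then have "?A = - ?B"
    by (simp add: eq_neg_iff_add_eq_0 add.commute)
  also have "\<dots> = (\<Sum>i\<in>{..<N} - R. (- c i) *s f i)"
    by (simp add: vector_smult_lneg sum_negf)
  finally have A: "?A = (\<Sum>i\<in>{..<N} - R. (- c i) *s f i)" .
  have "?A \<in> kspan K ({..<N} - R) f"
    unfolding A using c scalar_field_uminus[OF K] by (intro sum_smult_in_kspan) simp
  moreover have "?A \<in> kspan K R f"
    using R c by (intro sum_smult_in_kspan) auto
  ultimately have "?A = 0"
    using inter by blast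
  then show "?A = 0" and "?B = 0"
    using \<open>?B + ?A = 0\<close> by simp_all
qed

lemma annihilator_eq_0_if_klin_indep:
  assumes K: "scalar_field K" and indep: "klin_indep K R f"
    and u: "\<forall>i\<in>R. u i \<in> hspace K"
    and ann: "\<forall>x\<in>hspace K. (\<Sum>i\<in>R. hinner x (u i) *s f i) = 0"
  shows "\<forall>i\<in>R. u i = 0"
proof
  fix i
  assume i: "i \<in> R"
  have ui: "u i \<in> hspace K"
    using u i by blast
  then have "\<forall>j\<in>R. hinner (u i) (u j) \<in> K"
    using u hinner_in_scalar_field[OF K] by blast
  moreover have "(\<Sum>j\<in>R. hinner (u i) (u j) *s f j) = 0"
    using ann ui by simp
  ultimately have "\<forall>j\<in>R. hinner (u i) (u j) = 0"
    using indep[unfolded klin_indep_def, THEN spec[of _ "\<lambda>j. hinner (u i) (u j)"]] by blast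
  then have "hinner (u i) (u i) = 0"
    using i by blast
  then show "u i = 0"
    by simp
qed

lemma sum_norm_sq_canonical_dual_add:
  assumes K: "scalar_field K" and fr: "is_frame K N f" and R: "R \<subseteq> {..<N}"
    and u: "\<forall>i\<in>R. u i \<in> hspace K"
    and ann: "\<forall>x\<in>hspace K. (\<Sum>i\<in>R. hinner x (u i) *s f i) = 0"
  shows "(\<Sum>i\<in>R. (norm (canonical_dual K N f i + u i))\<^sup>2)
    = (\<Sum>i\<in>R. (norm (canonical_dual K N f i))\<^sup>2) + (\<Sum>i\<in>R. (norm (u i))\<^sup>2)"
proof -
  let ?h = "canonical_dual K N f"
  \<comment> \<open>The map \<open>x \<mapsto> \<Sum>\<^sub>i\<^sub>\<in>\<^sub>R \<langle>x, u\<^sub>i\<rangle> h\<^sub>i\<close> vanishes, hence so does its trace.\<close>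
  have "(\<Sum>i\<in>R. hinner (axis k 1) (u i) *s ?h i) = 0" for k
  proof (rule sum_smult_canonical_dual_eq_0[OF K fr R])
    show "\<forall>i\<in>R. hinner (axis k 1) (u i) \<in> K"
      using u hinner_in_scalar_field[OF K axis_in_hspace[OF K]] by blast
    show "(\<Sum>i\<in>R. hinner (axis k 1) (u i) *s f i) = 0"
      using ann axis_in_hspace[OF K] by blast
  qed
  then have trace: "(\<Sum>i\<in>R. hinner (?h i) (u i)) = 0"
    unfolding sum_hinner_eq_trace by simp
  have "(\<Sum>i\<in>R. inner (?h i) (u i)) = Re (\<Sum>i\<in>R. hinner (?h i) (u i))"
    by (simp add: Re_hinner)
  also have "\<dots> = 0"
    using trace by simp
  finally have orth: "(\<Sum>i\<in>R. inner (?h i) (u i)) = 0" .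
  have "(norm (?h i + u i))\<^sup>2 = ((norm (?h i))\<^sup>2 + (norm (u i))\<^sup>2) + 2 * inner (?h i) (u i)" for i
    by (simp add: power2_norm_eq_inner inner_add inner_commute)
  then have "(\<Sum>i\<in>R. (norm (?h i + u i))\<^sup>2)
      = (\<Sum>i\<in>R. (norm (?h i))\<^sup>2 + (norm (u i))\<^sup>2) + 2 * (\<Sum>i\<in>R. inner (?h i) (u i))"
    by (simp add: sum.distrib sum_distrib_left)
  then show ?thesis
    using orth by (simp add: sum.distrib)
qed

lemma dual_eq_canonical_dual:
  assumes K: "scalar_field K" and fr: "is_frame K N f" and dual: "is_dual K N f g"
    and R: "R \<subseteq> {..<N}"
    and inter: "kspan K R f \<inter> kspan K ({..<N} - R) f = {0}"
    and indep: "klin_indep K ({..<N} - R) f"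
    and le: "\<forall>i\<in>R. norm (g i) \<le> norm (canonical_dual K N f i)"
  shows "\<forall>i<N. g i = canonical_dual K N f i"
proof -
  define u where "u i = g i - canonical_dual K N f i" for i
  have u: "\<forall>i<N. u i \<in> hspace K"
    using dual canonical_dual(1)[OF K fr] unfolding u_def is_dual_def is_frame_def
    by (auto intro: hspace_diff[OF K])
  have "(\<Sum>i\<in>R. hinner x (u i) *s f i) = 0 \<and> (\<Sum>i\<in>{..<N} - R. hinner x (u i) *s f i) = 0"
    if x: "x \<in> hspace K" for x
  proof -
    have "\<forall>i<N. hinner x (u i) \<in> K"
      using u hinner_in_scalar_field[OF K x] by blast
    moreover have "(\<Sum>i<N. hinner x (u i) *s f i) = 0"
      unfolding u_def by (rule sum_hinner_dual_diff_eq_0[OF K fr dual x])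
    ultimately show ?thesis
      by (simp add: sum_smult_eq_0_split[OF K R inter])
  qed
  then have ann_R: "\<forall>x\<in>hspace K. (\<Sum>i\<in>R. hinner x (u i) *s f i) = 0"
    and ann_R2: "\<forall>x\<in>hspace K. (\<Sum>i\<in>{..<N} - R. hinner x (u i) *s f i) = 0"
    by blast+
  have "\<forall>i\<in>{..<N} - R. u i = 0"
    using annihilator_eq_0_if_klin_indep[OF K indep _ ann_R2] u by blast
  moreover have "\<forall>i\<in>R. u i = 0"
  proof -
    have uR: "\<forall>i\<in>R. u i \<in> hspace K"
      using u R by blast
    have "(\<Sum>i\<in>R. (norm (g i))\<^sup>2) \<le> (\<Sum>i\<in>R. (norm (canonical_dual K N f i))\<^sup>2)"
      using le by (intro sum_mono power_mono) auto
    then have "(\<Sum>i\<in>R. (norm (u i))\<^sup>2) \<le> 0"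
      using sum_norm_sq_canonical_dual_add[OF K fr R uR ann_R] by (simp add: u_def)
    then have "(\<Sum>i\<in>R. (norm (u i))\<^sup>2) = 0"
      by (intro order_antisym sum_nonneg) auto
    moreover have "finite R"
      using R finite_subset by blast
    ultimately show ?thesis
      by (simp add: sum_nonneg_eq_0_iff)
  qed
  ultimately show ?thesis
    by (auto simp: u_def)
qed

lemma weight_pos:
  assumes prob: "prob_seq N p" and wd: "\<forall>i<N. (\<Sum>j<N. p j) - p i \<noteq> 0"
    and n: "0 < n" and i: "i < N"
  shows "weight n N p i > 0"
proof -
  have sum: "(\<Sum>j<N. p j) = 1"
    using prob by (simp add: prob_seq_def)
  have p: "p i < 1"
    using prob wd i sum by (fastforce simp: prob_seq_def)
  have "N \<noteq> 1"
    using wd sum by auto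
  then have "real N - 1 > 0"
    using i by linarith
  then show ?thesis
    using n p by (simp add: weight_def sum)
qed

lemma frame_ex_nonzero:
  assumes K: "scalar_field K" and fr: "is_frame K N (f :: nat \<Rightarrow> complex ^ 'n)"
  shows "\<exists>i<N. f i \<noteq> 0"
proof (rule ccontr)
  assume "\<not> (\<exists>i<N. f i \<noteq> 0)"
  then have "kspan K {..<N} f \<subseteq> {0}"
    by (auto simp: kspan_def)
  moreover have "axis undefined 1 \<in> kspan K {..<N} f"
    using fr axis_in_hspace[OF K] by (simp add: is_frame_def)
  ultimately show False
    by (auto simp: axis_eq_0_iff)
qed

lemma dmp_1_canonical_dual_pos:
  fixes f :: "nat \<Rightarrow> complex ^ 'n"
  assumes K: "scalar_field K" and fr: "is_frame K N f"
    and q: "\<forall>i<N. weight CARD('n) N p i > 0"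
  shows "dmp K N p 1 f (canonical_dual K N f) > 0"
proof -
  have q0: "\<forall>i<N. weight CARD('n) N p i \<ge> 0"
    using q by (simp add: less_imp_le)
  obtain j where j: "j < N" "f j \<noteq> 0"
    using frame_ex_nonzero[OF K fr] by blast
  then have "canonical_dual K N f j \<noteq> 0"
    using canonical_dual(2)[OF K fr] by force
  then have "0 < weight CARD('n) N p j * norm (f j) * norm (canonical_dual K N f j)"
    using q j by simp
  also have "\<dots> \<le> dmp K N p 1 f (canonical_dual K N f)"
    unfolding dmp_1_eq_Max[OF K fr q0] using j by (auto intro!: Max_ge)
  finally show ?thesis .
qed

lemma norm_le_canonical_dual_if_dmp_1_le:
  fixes f g :: "nat \<Rightarrow> complex ^ 'n"
  assumes K: "scalar_field K" and fr: "is_frame K N f"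
    and q: "\<forall>i<N. weight CARD('n) N p i > 0"
    and le: "dmp K N p 1 f g \<le> dmp K N p 1 f (canonical_dual K N f)"
    and i: "i < N"
    and max: "weight CARD('n) N p i * norm (f i) * norm (canonical_dual K N f i)
      = dmp K N p 1 f (canonical_dual K N f)"
  shows "norm (g i) \<le> norm (canonical_dual K N f i)"
proof -
  have q0: "\<forall>i<N. weight CARD('n) N p i \<ge> 0"
    using q by (simp add: less_imp_le)
  have "weight CARD('n) N p i * norm (f i) * norm (g i) \<le> dmp K N p 1 f g"
    unfolding dmp_1_eq_Max[OF K fr q0] using i by (auto intro!: Max_ge)
  also have "\<dots> \<le> weight CARD('n) N p i * norm (f i) * norm (canonical_dual K N f i)"
    using le max by simp
  finally have "weight CARD('n) N p i * norm (f i) * norm (g i)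
      \<le> weight CARD('n) N p i * norm (f i) * norm (canonical_dual K N f i)" .
  moreover have "weight CARD('n) N p i * norm (f i) > 0"
    using dmp_1_canonical_dual_pos[OF K fr q] max q i
    by (metis mult_eq_0_iff norm_ge_zero norm_zero order_less_le zero_less_mult_iff)
  ultimately show ?thesis
    by (metis mult_le_cancel_left_pos)
qed

lemma dmp_cong:
  assumes "\<forall>i<N. g i = g' i"
  shows "dmp K N p m f g = dmp K N p m f g'"
proof -
  have "erasure_op N p L f g = erasure_op N p L f g'" if "L \<subseteq> {..<N}" for L
    using assms that unfolding erasure_op_def by (auto simp: fun_eq_iff intro!: sum.cong)
  then have "{opnorm K (erasure_op N p L f g) | L. L \<subseteq> {..<N} \<and> card L = m}
      = {opnorm K (erasure_op N p L f g') | L. L \<subseteq> {..<N} \<and> card L = m}"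
    by metis
  then show ?thesis
    by (simp add: dmp_def)
qed

lemma opt_dual_mono: "opt_dual K N p f m g \<Longrightarrow> k \<le> m \<Longrightarrow> opt_dual K N p f k g"
proof (induction m)
  case 0
  then show ?case
    by simp
next
  case (Suc m)
  then show ?case
    by (cases "k = Suc m") auto
qed

lemma unique_opt_dual_1_if_minimal:
  assumes dual: "is_dual K N f h"
    and minimal: "\<And>g. is_dual K N f g \<Longrightarrow> dmp K N p 1 f g \<le> dmp K N p 1 f h \<Longrightarrow> \<forall>i<N. g i = h i"
  shows "opt_dual K N p f 1 h" and "\<forall>g. opt_dual K N p f 1 g \<longrightarrow> (\<forall>i<N. g i = h i)"
proof -
  have "dmp K N p 1 f h \<le> dmp K N p 1 f g" if "is_dual K N f g" for g
    using minimal[OF that] dmp_cong[of N g h] by fastforce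
  then have inf: "Inf {dmp K N p 1 f g | g. opt_dual K N p f 0 g} = dmp K N p 1 f h"
    using dual by (intro cInf_eq_minimum) auto
  then show "opt_dual K N p f 1 h"
    using dual by simp
  show "\<forall>g. opt_dual K N p f 1 g \<longrightarrow> (\<forall>i<N. g i = h i)"
    using minimal inf by simp
qed

lemma opt_dual_if_unique_opt_dual_1:
  assumes opt: "opt_dual K N p f 1 h"
    and unique: "\<forall>g. opt_dual K N p f 1 g \<longrightarrow> (\<forall>i<N. g i = h i)"
    and m: "1 \<le> m"
  shows "opt_dual K N p f m h"
  using m
proof (induction m rule: nat_induct_at_least)
  case base
  show ?case
    by (rule opt)
next
  case (Suc m)
  have "{dmp K N p (Suc m) f g | g. opt_dual K N p f m g} = {dmp K N p (Suc m) f h}"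
  proof (intro equalityI subsetI)
    fix y
    assume "y \<in> {dmp K N p (Suc m) f g | g. opt_dual K N p f m g}"
    then obtain g where g: "opt_dual K N p f m g" and y: "y = dmp K N p (Suc m) f g"
      by blast
    have "opt_dual K N p f 1 g"
      using g \<open>1 \<le> m\<close> by (rule opt_dual_mono)
    then have "\<forall>i<N. g i = h i"
      using unique by blast
    then show "y \<in> {dmp K N p (Suc m) f h}"
      using y dmp_cong by simp
  qed (use Suc.IH in blast)
  then show ?case
    using Suc.IH by simp
qed

theorem corollary4p1:
  fixes K :: "complex set" and N :: nat and f :: "nat \<Rightarrow> complex ^ 'n" and p :: "nat \<Rightarrow> real"
  assumes K: "scalar_field K"
    and NgE: "N \<ge> CARD('n)"
    and frame: "is_frame K N f"
    and prob: "prob_seq N p"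
    and wd: "\<forall>i<N. (\<Sum>j<N. p j) - p i \<noteq> 0"
  defines "q \<equiv> weight CARD('n) N p"
  defines "c \<equiv> Max {q i * norm (f i) * norm (frame_op_inv K N f (f i)) | i. i < N}"
  defines "\<rho>1 \<equiv> {i. i < N \<and> q i * norm (f i) * norm (frame_op_inv K N f (f i)) = c}"
  defines "\<rho>2 \<equiv> {..<N} - \<rho>1"
  assumes inter: "kspan K \<rho>1 f \<inter> kspan K \<rho>2 f = {0}"
    and indep: "klin_indep K \<rho>2 f"
  shows "opt_dual K N p f 1 (canonical_dual K N f)
       \<and> (\<forall>g. opt_dual K N p f 1 g \<longrightarrow> (\<forall>i<N. g i = canonical_dual K N f i))
       \<and> (\<forall>m. 1 \<le> m \<and> m \<le> N \<longrightarrow> opt_dual K N p f m (canonical_dual K N f))"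
proof -
  let ?h = "canonical_dual K N f"
  have q: "\<forall>i<N. weight CARD('n) N p i > 0"
    using weight_pos[OF prob wd] by simp
  have c: "dmp K N p 1 f ?h = c"
    using dmp_1_eq_Max[OF K frame, of p ?h] q by (simp add: c_def q_def canonical_dual_def less_imp_le)
  have minimal: "\<forall>i<N. g i = ?h i"
    if g: "is_dual K N f g" and le: "dmp K N p 1 f g \<le> dmp K N p 1 f ?h" for g
  proof (rule dual_eq_canonical_dual[OF K frame g _ inter[unfolded \<rho>2_def] indep[unfolded \<rho>2_def]])
    show "\<rho>1 \<subseteq> {..<N}"
      by (auto simp: \<rho>1_def)
    show "\<forall>i\<in>\<rho>1. norm (g i) \<le> norm (?h i)"
      using norm_le_canonical_dual_if_dmp_1_le[OF K frame q le] c
      by (auto simp: \<rho>1_def q_def canonical_dual_def)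
  qed
  have opt: "opt_dual K N p f 1 ?h" and unique: "\<forall>g. opt_dual K N p f 1 g \<longrightarrow> (\<forall>i<N. g i = ?h i)"
    using unique_opt_dual_1_if_minimal[OF is_dual_canonical_dual[OF K frame] minimal] by blast+
  then show ?thesis
    using opt_dual_if_unique_opt_dual_1 by blast
qed

end
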